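(* Let $K$ be any field, $R=K[x_1,\dots,x_5]$ and $I=(x_1x_3,\ x_1x_4,\ x_2x_4,\ x_2x_5,\ x_3x_5)$. Then $$I=\sqrt{(x_1x_3,\ x_1x_4+x_2x_5,\ x_2x_4+x_3x_5)},$$ and $\operatorname{ara} I=3$; in particular $I$ is a set-theoretic complete intersection.
   Context: The arithmetical rank $\operatorname{ara} I$ of an ideal $I$ is the minimum number of elements of $R$ generating an ideal with the same radical as $I$. An ideal is a set-theoretic complete intersection if its arithmetical rank equals its height. $I$ has (pure) height 3. *)

theory Defs
  imports "HOL-Computational_Algebra.Polynomial"
begin

definition is_ideal :: "'a::comm_ring_1 set \<Rightarrow> bool" where
  "is_ideal J \<longleftrightarrow> 0 \<in> J \<and> (\<forall>a\<in>J. \<forall>b\<in>J. a + b \<in> J) \<and> (\<forall>r. \<forall>a\<in>J. r * a \<in> J)"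

definition ideal_gen :: "'a::comm_ring_1 set \<Rightarrow> 'a set" where
  "ideal_gen S = \<Inter>{J. is_ideal J \<and> S \<subseteq> J}"

definition rad :: "'a::comm_ring_1 set \<Rightarrow> 'a set" where
  "rad J = {x. \<exists>n::nat. x ^ n \<in> J}"

definition ara :: "'a::comm_ring_1 set \<Rightarrow> nat" where
  "ara I = (LEAST n. \<exists>gs::'a list. length gs = n \<and> rad (ideal_gen (set gs)) = rad I)"

text \<open>The polynomial ring K[x1,...,x5] rendered as the iterated ring
  K[x1][x2][x3][x4][x5]; x1 is the innermost variable.\<close>
type_synonym 'a mpoly5 = "'a poly poly poly poly poly"

definition X1 :: "'a::field mpoly5" where "X1 = [:[:[:[:[:0, 1:]:]:]:]:]"
definition X2 :: "'a::field mpoly5" where "X2 = [:[:[:[:0, 1:]:]:]:]"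
definition X3 :: "'a::field mpoly5" where "X3 = [:[:[:0, 1:]:]:]"
definition X4 :: "'a::field mpoly5" where "X4 = [:[:0, 1:]:]"
definition X5 :: "'a::field mpoly5" where "X5 = [:0, 1:]"

end

theory Submission
  imports Defs "Jordan_Normal_Form.Determinant"
begin

text \<open>\<open>I\<close> is the edge ideal of the pentagon \<open>1 - 3 - 5 - 2 - 4 - 1\<close>. Being generated by squarefree
  monomials it is radical, and the squares of its generators lie in
  \<open>J = (x\<^sub>1x\<^sub>3, x\<^sub>1x\<^sub>4 + x\<^sub>2x\<^sub>5, x\<^sub>2x\<^sub>4 + x\<^sub>3x\<^sub>5)\<close>, so \<open>I = \<surd>J\<close>.
  If \<open>I = \<surd>(f, g)\<close>, setting \<open>x\<^sub>4 = x\<^sub>5 = 1\<close> gives \<open>F, G\<close> in the maximal ideal of the origin of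
  \<open>K[x, y, z]\<close> whose radical contains \<open>x, y, z\<close>. After Nagata's substitution
  \<open>x \<mapsto> x + z\<^bsup>e\<^sub>1\<^esup>, y \<mapsto> y + z\<^bsup>e\<^sub>2\<^esup>\<close> we may assume \<open>F\<close> monic in \<open>z\<close>. Then the norm
  \<open>N(G) = det(G\<cdot> : K[x,y][z]/(F))\<close> divides a power of \<open>x\<close> and a power of \<open>y\<close>, hence is a
  nonzero constant, whereas it vanishes at the origin because \<open>F\<close> and \<open>G\<close> do.\<close>

section \<open>Ideals and radicals\<close>

lemma is_ideal_ideal_gen: "is_ideal (ideal_gen S)"
  unfolding ideal_gen_def is_ideal_def by auto

lemma ideal_gen_superset: "S \<subseteq> ideal_gen S"
  unfolding ideal_gen_def by auto

lemma ideal_gen_minimal: "is_ideal J \<Longrightarrow> S \<subseteq> J \<Longrightarrow> ideal_gen S \<subseteq> J"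
  unfolding ideal_gen_def by auto

lemma ideal_gen_mono: "S \<subseteq> T \<Longrightarrow> ideal_gen S \<subseteq> ideal_gen T"
  by (meson is_ideal_ideal_gen ideal_gen_minimal ideal_gen_superset order_trans)

context
  fixes J :: "'a::comm_ring_1 set"
  assumes J: "is_ideal J"
begin

lemma ideal_zero: "0 \<in> J"
  using J unfolding is_ideal_def by blast

lemma ideal_add: "a \<in> J \<Longrightarrow> b \<in> J \<Longrightarrow> a + b \<in> J"
  using J unfolding is_ideal_def by blast

lemma ideal_mult_left: "a \<in> J \<Longrightarrow> r * a \<in> J"
  using J unfolding is_ideal_def by blast

lemma ideal_mult_right: "a \<in> J \<Longrightarrow> a * r \<in> J"
  using ideal_mult_left[of a r] by (simp add: mult.commute)

lemma ideal_diff: "a \<in> J \<Longrightarrow> b \<in> J \<Longrightarrow> a - b \<in> J"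
  using ideal_add[of a "(-1) * b"] ideal_mult_left[of b "-1"] by simp

lemma ideal_sum: "(\<And>i. i \<in> A \<Longrightarrow> f i \<in> J) \<Longrightarrow> sum f A \<in> J"
  by (induction A rule: infinite_finite_induct) (auto intro: ideal_zero ideal_add)

lemma ideal_power: "a \<in> J \<Longrightarrow> 0 < n \<Longrightarrow> a ^ n \<in> J"
  by (cases n) (auto intro: ideal_mult_right)

end

lemma ideal_power_diff:
  assumes J: "is_ideal J" and "x ^ n \<in> J" "y \<in> J"
  shows "(x - y) ^ n \<in> J"
proof (cases n)
  case (Suc m)
  have "x ^ n - (x - y) ^ n = (x - (x - y)) * (\<Sum>i<Suc m. x ^ i * (x - y) ^ (m - i))"
    unfolding Suc by (rule diff_power_eq_sum)
  then have "x ^ n - (x - y) ^ n \<in> J"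
    using ideal_mult_right[OF J assms(3)] by simp
  then have "x ^ n - (x ^ n - (x - y) ^ n) \<in> J"
    by (rule ideal_diff[OF J assms(2)])
  then show ?thesis by simp
qed (use assms(2) in simp)

lemma ideal_gen_pair: "ideal_gen {f, g} = {u * f + v * g | u v. True}"
proof
  let ?C = "{u * f + v * g | u v. True}"
  have sum: "a + b \<in> ?C" if ab: "a \<in> ?C" "b \<in> ?C" for a b
  proof -
    obtain u v u' v' where "a = u * f + v * g" "b = u' * f + v' * g"
      using ab by blast
    then have "a + b = (u + u') * f + (v + v') * g" by (simp add: algebra_simps)
    then show ?thesis by blast
  qed
  have mult: "r * a \<in> ?C" if a: "a \<in> ?C" for r a
  proof -
    obtain u v where "a = u * f + v * g" using a by blast
    then have "r * a = (r * u) * f + (r * v) * g" by (simp add: algebra_simps)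
    then show ?thesis by blast
  qed
  have "0 = 0 * f + 0 * g" "f = 1 * f + 0 * g" "g = 0 * f + 1 * g" by simp_all
  then have "0 \<in> ?C" "{f, g} \<subseteq> ?C" by blast+
  with sum mult show "ideal_gen {f, g} \<subseteq> ?C"
    by (intro ideal_gen_minimal) (auto simp: is_ideal_def)
  show "?C \<subseteq> ideal_gen {f, g}"
    using ideal_gen_superset[of "{f, g}"]
    by (auto intro!: ideal_add ideal_mult_left is_ideal_ideal_gen)
qed

lemma ideal_gen_insert_zero: "ideal_gen (insert 0 S) = ideal_gen S"
proof
  show "ideal_gen (insert 0 S) \<subseteq> ideal_gen S"
    using ideal_gen_superset[of S] ideal_zero[OF is_ideal_ideal_gen]
    by (intro ideal_gen_minimal is_ideal_ideal_gen) auto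
  show "ideal_gen S \<subseteq> ideal_gen (insert 0 S)"
    by (rule ideal_gen_mono) auto
qed

lemma rad_superset: "is_ideal J \<Longrightarrow> J \<subseteq> rad J"
  unfolding rad_def by (auto intro!: exI[of _ 1])

lemma rad_mono: "J \<subseteq> L \<Longrightarrow> rad J \<subseteq> rad L"
  unfolding rad_def by auto

lemma is_ideal_rad:
  assumes J: "is_ideal J"
  shows "is_ideal (rad J)"
  unfolding is_ideal_def
proof (intro conjI ballI allI)
  show "0 \<in> rad J"
    unfolding rad_def using ideal_zero[OF J] by (auto intro!: exI[of _ 1])
next
  fix r a assume "a \<in> rad J"
  then obtain n where "a ^ n \<in> J" unfolding rad_def by auto
  then have "(r * a) ^ n \<in> J"
    using ideal_mult_left[OF J] by (simp add: power_mult_distrib)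
  then show "r * a \<in> rad J" unfolding rad_def by auto
next
  fix a b assume "a \<in> rad J" "b \<in> rad J"
  then obtain m n where m: "a ^ m \<in> J" and n: "b ^ n \<in> J" unfolding rad_def by auto
  have "of_nat ((m + n) choose k) * a ^ k * b ^ (m + n - k) \<in> J" for k
  proof (cases "m \<le> k")
    case True
    then have "a ^ k = a ^ m * a ^ (k - m)" by (simp flip: power_add)
    then have "of_nat ((m + n) choose k) * a ^ k * b ^ (m + n - k)
        = (of_nat ((m + n) choose k) * a ^ (k - m) * b ^ (m + n - k)) * a ^ m"
      by (simp add: ac_simps)
    then show ?thesis using ideal_mult_left[OF J m] by simp
  next
    case False
    then have "b ^ (m + n - k) = b ^ (m - k) * b ^ n"
      by (simp flip: power_add add: add.commute)
    then have "of_nat ((m + n) choose k) * a ^ k * b ^ (m + n - k)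
        = (of_nat ((m + n) choose k) * a ^ k * b ^ (m - k)) * b ^ n"
      by (simp add: ac_simps)
    then show ?thesis using ideal_mult_left[OF J n] by simp
  qed
  then have "(a + b) ^ (m + n) \<in> J"
    unfolding binomial_ring by (rule ideal_sum[OF J])
  then show "a + b \<in> rad J" unfolding rad_def by auto
qed

lemma rad_rad: "rad (rad J) = rad J"
proof
  show "rad (rad J) \<subseteq> rad J"
    unfolding rad_def by (auto simp flip: power_mult)
  show "rad J \<subseteq> rad (rad J)"
    unfolding rad_def[of "rad J"] by (auto intro!: exI[of _ 1])
qed

lemma ideal_gen_subset_rad: "is_ideal J \<Longrightarrow> S \<subseteq> rad J \<Longrightarrow> ideal_gen S \<subseteq> rad J"
  by (rule ideal_gen_minimal[OF is_ideal_rad])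

definition radical :: "'a::comm_ring_1 set \<Rightarrow> bool" where
  "radical J \<longleftrightarrow> rad J \<subseteq> J"

lemma comm_ring_hom_poly: "comm_ring_hom (\<lambda>p. poly p a)"
  by unfold_locales auto

lemma comm_ring_hom_const_poly: "comm_ring_hom (\<lambda>a. [:a:])"
  by unfold_locales auto

lemma comm_ring_hom_comp:
  assumes "comm_ring_hom h" "comm_ring_hom g"
  shows "comm_ring_hom (g \<circ> h)"
proof -
  interpret h: comm_ring_hom h by fact
  interpret g: comm_ring_hom g by fact
  show ?thesis
    by unfold_locales (simp_all add: h.hom_add h.hom_mult g.hom_add g.hom_mult)
qed

lemma degree_map_poly_le: "h 0 = 0 \<Longrightarrow> degree (map_poly h p) \<le> degree p"
  by (rule degree_le) (simp add: coeff_map_poly coeff_eq_0)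

lemma comm_ring_hom_map_poly:
  assumes "comm_ring_hom h"
  shows "comm_ring_hom (map_poly h)"
proof -
  interpret comm_ring_hom h by fact
  show ?thesis
    by unfold_locales
      (auto intro!: poly_eqI simp: coeff_map_poly coeff_mult hom_add hom_mult hom_sum)
qed

lemma comm_ring_hom_poly_map_poly:
  "comm_ring_hom h \<Longrightarrow> comm_ring_hom (\<lambda>p. poly (map_poly h p) a)"
  using comm_ring_hom_comp[OF comm_ring_hom_map_poly comm_ring_hom_poly]
  by (simp add: comp_def)

lemma (in comm_ring_hom) hom_ideal_gen:
  assumes "x \<in> ideal_gen S"
  shows "hom x \<in> ideal_gen (hom ` S)"
proof -
  let ?L = "{y. hom y \<in> ideal_gen (hom ` S)}"
  note J = is_ideal_ideal_gen[of "hom ` S"]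
  have "is_ideal ?L"
    unfolding is_ideal_def
    using ideal_zero[OF J] ideal_add[OF J] ideal_mult_left[OF J]
    by (simp add: hom_add hom_mult)
  moreover have "S \<subseteq> ?L"
    using ideal_gen_superset[of "hom ` S"] by auto
  ultimately show ?thesis
    using ideal_gen_minimal assms by blast
qed

lemma (in comm_ring_hom) hom_rad_ideal_gen:
  assumes "x \<in> rad (ideal_gen S)"
  shows "hom x \<in> rad (ideal_gen (hom ` S))"
proof -
  obtain n where "x ^ n \<in> ideal_gen S" using assms unfolding rad_def by auto
  then have "hom (x ^ n) \<in> ideal_gen (hom ` S)" by (rule hom_ideal_gen)
  then have "hom x ^ n \<in> ideal_gen (hom ` S)" by (simp add: hom_power)
  then show ?thesis unfolding rad_def by auto
qed

section \<open>Squarefree monomial ideals are radical\<close>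

lemma radical_ideal_gen_empty: "radical (ideal_gen {} :: 'a::idom set)"
proof -
  have "is_ideal {0 :: 'a}" unfolding is_ideal_def by auto
  then have "ideal_gen {} \<subseteq> {0 :: 'a}" by (rule ideal_gen_minimal) simp
  then show ?thesis
    unfolding radical_def rad_def using ideal_zero[OF is_ideal_ideal_gen] by auto
qed

lemma radical_ideal_gen_one: "1 \<in> S \<Longrightarrow> radical (ideal_gen S)"
  unfolding radical_def
  using ideal_mult_left[OF is_ideal_ideal_gen, of 1 S] ideal_gen_superset[of S] by auto

text \<open>For \<open>L\<^sub>0 \<subseteq> L\<close> this is the ideal \<open>L\<^sub>0 + x L[x]\<close> of \<open>R[x]\<close>.\<close>
definition coeff_ideal :: "'a::comm_ring_1 set \<Rightarrow> 'a set \<Rightarrow> 'a poly set" where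
  "coeff_ideal L\<^sub>0 L = {p. coeff p 0 \<in> L\<^sub>0 \<and> (\<forall>j. coeff p j \<in> L)}"

lemma is_ideal_coeff_ideal:
  assumes L\<^sub>0: "is_ideal L\<^sub>0" and L: "is_ideal L"
  shows "is_ideal (coeff_ideal L\<^sub>0 L)"
  unfolding is_ideal_def coeff_ideal_def
proof (intro conjI ballI allI CollectI)
  fix r p assume p: "p \<in> {p. coeff p 0 \<in> L\<^sub>0 \<and> (\<forall>j. coeff p j \<in> L)}"
  then show "coeff (r * p) 0 \<in> L\<^sub>0"
    by (simp add: coeff_mult_0 ideal_mult_left[OF L\<^sub>0])
  show "coeff (r * p) j \<in> L" for j
    using p unfolding coeff_mult by (auto intro!: ideal_sum[OF L] ideal_mult_left[OF L])
qed (auto intro: ideal_zero[OF L\<^sub>0] ideal_zero[OF L] ideal_add[OF L\<^sub>0] ideal_add[OF L])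

lemma coeffs_in_ideal_gen:
  assumes "\<And>j. coeff p j \<in> ideal_gen C"
  shows "p \<in> ideal_gen ((\<lambda>c. [:c:]) ` C)"
proof -
  interpret const: comm_ring_hom "\<lambda>c. [:c:]" by (rule comm_ring_hom_const_poly)
  have "p = (\<Sum>j\<le>degree p. [:coeff p j:] * monom 1 j)"
    by (simp add: smult_monom flip: poly_as_sum_of_monoms)
  also have "\<dots> \<in> ideal_gen ((\<lambda>c. [:c:]) ` C)"
    using const.hom_ideal_gen[OF assms]
    by (intro ideal_sum ideal_mult_right is_ideal_ideal_gen)
  finally show ?thesis .
qed

lemma pCons_0_in_ideal_gen:
  assumes "\<And>j. coeff q j \<in> ideal_gen (A \<union> B)"
  shows "pCons 0 q \<in> ideal_gen ((\<lambda>a. [:a:]) ` A \<union> (\<lambda>b. [:0, b:]) ` B)"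
    (is "_ \<in> ?J")
proof -
  let ?G = "(\<lambda>a. [:a:]) ` A \<union> (\<lambda>b. [:0, b:]) ` B"
  note J = is_ideal_ideal_gen[of ?G]
  let ?Q = "{q. pCons 0 q \<in> ?J}"
  have "pCons 0 (r * q) \<in> ?J" if "pCons 0 q \<in> ?J" for r q
    using ideal_mult_left[OF J that, of r] by simp
  moreover have "pCons 0 (q + q') \<in> ?J" if "pCons 0 q \<in> ?J" "pCons 0 q' \<in> ?J" for q q'
    using ideal_add[OF J that] by simp
  moreover have "pCons 0 0 \<in> ?J" using ideal_zero[OF J] by simp
  ultimately have Q: "is_ideal ?Q"
    unfolding is_ideal_def by blast
  have "[:c:] \<in> ?Q" if "c \<in> A" for c
  proof -
    have "[:c:] \<in> ?J" using that ideal_gen_superset[of ?G] by blast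
    then have "[:0, 1:] * [:c:] \<in> ?J" by (rule ideal_mult_left[OF J])
    then show ?thesis by simp
  qed
  moreover have "[:c:] \<in> ?Q" if "c \<in> B" for c
  proof -
    have "[:0, c:] \<in> ?G" using that by blast
    then show ?thesis using ideal_gen_superset[of ?G] by auto
  qed
  ultimately have "(\<lambda>c. [:c:]) ` (A \<union> B) \<subseteq> ?Q" by blast
  then have "ideal_gen ((\<lambda>c. [:c:]) ` (A \<union> B)) \<subseteq> ?Q"
    by (rule ideal_gen_minimal[OF Q])
  then show ?thesis
    using coeffs_in_ideal_gen[OF assms] by blast
qed

lemma ideal_gen_const_X_mult:
  "ideal_gen ((\<lambda>a. [:a:]) ` A \<union> (\<lambda>b. [:0, b:]) ` B) = coeff_ideal (ideal_gen A) (ideal_gen (A \<union> B))"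
  (is "ideal_gen ?G = ?E")
proof
  have AB: "c \<in> ideal_gen (A \<union> B)" if "c \<in> A \<union> B" for c
    using ideal_gen_superset[of "A \<union> B"] that by auto
  have zero: "0 \<in> ideal_gen (A \<union> B)" "0 \<in> ideal_gen A"
    by (rule ideal_zero[OF is_ideal_ideal_gen])+
  have "[:a:] \<in> ?E" if "a \<in> A" for a
    using that AB ideal_gen_superset[of A] zero
    unfolding coeff_ideal_def by (auto simp: coeff_pCons split: nat.split)
  moreover have "[:0, b:] \<in> ?E" if "b \<in> B" for b
    using that AB zero
    unfolding coeff_ideal_def by (auto simp: coeff_pCons split: nat.split)
  ultimately have "?G \<subseteq> ?E" by blast
  then show "ideal_gen ?G \<subseteq> ?E"
    by (intro ideal_gen_minimal is_ideal_coeff_ideal is_ideal_ideal_gen)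
next
  let ?J = "ideal_gen ?G"
  note J = is_ideal_ideal_gen[of ?G]
  interpret const: comm_ring_hom "\<lambda>c. [:c:]" by (rule comm_ring_hom_const_poly)
  have "ideal_gen ((\<lambda>a. [:a:]) ` A) \<subseteq> ?J"
    by (rule ideal_gen_mono) blast
  then have const_in: "[:a:] \<in> ?J" if "a \<in> ideal_gen A" for a
    using const.hom_ideal_gen[OF that] by blast
  show "?E \<subseteq> ?J"
  proof
    fix p assume p: "p \<in> ?E"
    obtain a q where pq: "p = pCons a q" by (cases p) auto
    have "a \<in> ideal_gen A" "\<forall>j. coeff p j \<in> ideal_gen (A \<union> B)"
      using p by (simp_all add: pq coeff_ideal_def)
    then have "a \<in> ideal_gen A" "coeff q j \<in> ideal_gen (A \<union> B)" for j
      by (auto simp: pq dest: spec[of _ "Suc j"])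
    then have "[:a:] + pCons 0 q \<in> ?J"
      by (intro ideal_add[OF J] const_in pCons_0_in_ideal_gen)
    then show "p \<in> ?J" by (simp add: pq)
  qed
qed

lemma coeff_mult_at_degree_bounds:
  fixes p q :: "'a::comm_ring_1 poly"
  assumes "degree p \<le> a" "degree q \<le> b"
  shows "coeff (p * q) (a + b) = coeff p a * coeff q b"
proof -
  have "coeff p i * coeff q (a + b - i) = 0" if "i \<le> a + b" "i \<noteq> a" for i
    using assms that by (cases "i < a") (auto simp: coeff_eq_0)
  then have "(\<Sum>i\<in>{..a + b} - {a}. coeff p i * coeff q (a + b - i)) = 0"
    by (intro sum.neutral) auto
  then show ?thesis
    unfolding coeff_mult by (subst sum.remove[of _ a]) auto
qed

lemma coeff_power_at_degree_bound:
  fixes p :: "'a::comm_ring_1 poly"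
  assumes "degree p \<le> d"
  shows "coeff (p ^ n) (n * d) = coeff p d ^ n"
proof (induction n)
  case (Suc n)
  have "degree (p ^ n) \<le> n * d"
    using degree_power_le[of p n] assms by (metis le_trans mult.commute mult_le_mono2)
  then show ?case
    using coeff_mult_at_degree_bounds[OF assms, of "p ^ n" "n * d"] Suc by simp
qed simp

text \<open>If \<open>p\<^sup>n \<in> L[x]\<close> then the leading coefficient of \<open>p\<close> lies in \<open>L\<close>; subtract it
  and induct on the degree.\<close>
lemma radical_coeff_ideal_extension:
  assumes L: "is_ideal L" and "radical L"
  shows "radical (coeff_ideal L L)"
  unfolding radical_def
proof
  fix p assume "p \<in> rad (coeff_ideal L L)"
  then obtain n where "p ^ n \<in> coeff_ideal L L" unfolding rad_def by auto
  then show "p \<in> coeff_ideal L L"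
  proof (induction "degree p" arbitrary: p rule: less_induct)
    case less
    note E = is_ideal_coeff_ideal[OF L L]
    define d where "d = degree p"
    define a where "a = coeff p d"
    have "coeff (p ^ n) (n * d) \<in> L"
      using less.prems unfolding coeff_ideal_def by simp
    then have "a ^ n \<in> L"
      using coeff_power_at_degree_bound[of p d n] unfolding a_def d_def by simp
    then have "a \<in> L"
      using \<open>radical L\<close> unfolding radical_def rad_def by auto
    then have a: "monom a d \<in> coeff_ideal L L"
      unfolding coeff_ideal_def using ideal_zero[OF L] by (auto simp: coeff_monom)
    show ?case
    proof (cases "d = 0")
      case True
      then show ?thesis using a degree_0_id[of p] by (simp add: a_def d_def monom_0)
    next
      case False
      define p' where "p' = p - monom a d"
      have "coeff p' j = 0" if "d \<le> j" for j
        using that by (cases "j = d") (simp_all add: p'_def a_def d_def coeff_monom coeff_eq_0)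
      then have "degree p' \<le> d - 1"
        using False by (intro degree_le) simp
      then have "degree p' < degree p"
        using False d_def by simp
      moreover have "p' ^ n \<in> coeff_ideal L L"
        unfolding p'_def using less.prems a by (rule ideal_power_diff[OF E])
      ultimately have "p' \<in> coeff_ideal L L" by (rule less.hyps)
      then have "p' + monom a d \<in> coeff_ideal L L"
        by (rule ideal_add[OF E _ a])
      then show ?thesis by (simp add: p'_def)
    qed
  qed
qed

lemma radical_coeff_ideal:
  assumes L\<^sub>0: "radical L\<^sub>0" and L: "is_ideal L" "radical L"
  shows "radical (coeff_ideal L\<^sub>0 L)"
  unfolding radical_def
proof
  fix p assume "p \<in> rad (coeff_ideal L\<^sub>0 L)"
  then obtain n where n: "p ^ n \<in> coeff_ideal L\<^sub>0 L" unfolding rad_def by auto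
  then have "coeff p 0 ^ n \<in> L\<^sub>0"
    unfolding coeff_ideal_def by (simp add: coeff_0_power)
  then have "coeff p 0 \<in> L\<^sub>0"
    using L\<^sub>0 unfolding radical_def rad_def by auto
  moreover have "p ^ n \<in> coeff_ideal L L"
    using n unfolding coeff_ideal_def by simp
  then have "p \<in> rad (coeff_ideal L L)"
    unfolding rad_def by blast
  then have "p \<in> coeff_ideal L L"
    using radical_coeff_ideal_extension[OF L] unfolding radical_def by blast
  ultimately show "p \<in> coeff_ideal L\<^sub>0 L"
    unfolding coeff_ideal_def by simp
qed

lemma radical_ideal_gen_lift:
  assumes "radical (ideal_gen A)" "radical (ideal_gen C)" "C = A \<union> B"
    and "S = (\<lambda>a. [:a:]) ` A \<union> (\<lambda>b. [:0, b:]) ` B"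
  shows "radical (ideal_gen S)"
  unfolding assms(4) ideal_gen_const_X_mult
  by (rule radical_coeff_ideal[OF assms(1) is_ideal_ideal_gen assms(2)[unfolded assms(3)]])

text \<open>Each step splits off the outermost variable \<open>x\<close>, writing the ideal as \<open>I\<^sub>0 + x I\<^sub>1\<close> where
  \<open>I\<^sub>0\<close> and \<open>I\<^sub>0 + I\<^sub>1\<close> are again generated by squarefree monomials in fewer variables
  (or contain \<open>1\<close>). The variables \<open>x\<^sub>1, \<dots>, x\<^sub>k\<close> of \<open>K[x\<^sub>1]\<dots>[x\<^sub>k]\<close> are called \<open>?x\<close> for
  \<open>k = 1\<close> and \<open>?yi\<close>, \<open>?zi\<close>, \<open>?wi\<close> for \<open>k = 2, 3, 4\<close>.\<close>
lemma radical_edge_ideal: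
  "radical (ideal_gen {X1 * X3, X1 * X4, X2 * X4, X2 * X5, X3 * X5 :: 'a::field mpoly5})"
proof -
  let ?x = "[:0, 1:] :: 'a poly"
  let ?y1 = "[:?x:]" and ?y2 = "[:0, 1:] :: 'a poly poly"
  let ?z1 = "[:?y1:]" and ?z2 = "[:?y2:]" and ?z3 = "[:0, 1:] :: 'a poly poly poly"
  let ?w1 = "[:?z1:]" and ?w2 = "[:?z2:]" and ?w3 = "[:?z3:]"
    and ?w4 = "[:0, 1:] :: 'a poly poly poly poly"
  have R1: "radical (ideal_gen {?x})"
    by (rule radical_ideal_gen_lift[where B = "{1}", OF radical_ideal_gen_empty radical_ideal_gen_one]) auto
  have R2a: "radical (ideal_gen {?y1})"
    by (rule radical_ideal_gen_lift[where B = "{}", OF R1 R1]) auto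
  have R2b: "radical (ideal_gen {?y1, ?y2})"
    by (rule radical_ideal_gen_lift[where B = "{1}", OF R1 radical_ideal_gen_one]) auto
  have R2c: "radical (ideal_gen {?y2})"
    by (rule radical_ideal_gen_lift[where B = "{1}", OF radical_ideal_gen_empty radical_ideal_gen_one]) auto
  have R3a: "radical (ideal_gen {?z1 * ?z3})"
    by (rule radical_ideal_gen_lift[where B = "{?y1}", OF radical_ideal_gen_empty R2a]) auto
  have R3b: "radical (ideal_gen {?z1 * ?z3, ?z1, ?z2})"
    by (rule radical_ideal_gen_lift[where B = "{?y1}", OF R2b R2b]) auto
  have R3c: "radical (ideal_gen {?z1 * ?z3, ?z2, ?z3})"
    by (rule radical_ideal_gen_lift[where B = "{?y1, 1}", OF R2c radical_ideal_gen_one]) auto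
  have R3d: "radical (ideal_gen {?z1 * ?z3, ?z1, ?z2, ?z3})"
    by (rule radical_ideal_gen_lift[where B = "{?y1, 1}", OF R2b radical_ideal_gen_one]) auto
  have R4a: "radical (ideal_gen {?w1 * ?w3, ?w1 * ?w4, ?w2 * ?w4})"
    by (rule radical_ideal_gen_lift[where B = "{?z1, ?z2}", OF R3a R3b]) auto
  have R4b: "radical (ideal_gen {?w1 * ?w3, ?w1 * ?w4, ?w2 * ?w4, ?w2, ?w3})"
    by (rule radical_ideal_gen_lift[where B = "{?z1, ?z2}", OF R3c R3d]) auto
  show ?thesis
    unfolding X1_def X2_def X3_def X4_def X5_def
    by (rule radical_ideal_gen_lift[where B = "{?w2, ?w3}", OF R4a R4b]) auto
qed

section \<open>Norms modulo a monic polynomial\<close>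

lemma det_zero_row:
  assumes A: "A \<in> carrier_mat n n" and k: "k < n" and zero: "\<And>j. j < n \<Longrightarrow> A $$ (k, j) = 0"
  shows "det A = 0"
proof -
  have "A = mat\<^sub>r n n (\<lambda>i. if i = k then 0\<^sub>v n else row A i)"
    using A zero by (intro eq_matI) auto
  also have "det \<dots> = 0"
    using A by (intro det_row_0[OF k]) auto
  finally show ?thesis .
qed

text \<open>The matrix of multiplication by \<open>p\<close> on \<open>R[z]/(f)\<close> in the basis \<open>1, z, \<dots>, z\<^bsup>d-1\<^esup>\<close>,
  \<open>d = degree f\<close>; for monic \<open>f\<close> its determinant is the norm of \<open>p\<close>.\<close>
definition mult_matrix :: "'a::idom poly \<Rightarrow> 'a poly \<Rightarrow> 'a mat" where
  "mult_matrix f p = mat (degree f) (degree f) (\<lambda>(i, j). coeff (pseudo_mod (p * monom 1 j) f) i)"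

lemma mult_matrix_dims [simp]:
  "dim_row (mult_matrix f p) = degree f" "dim_col (mult_matrix f p) = degree f"
  unfolding mult_matrix_def by simp_all

lemma mult_matrix_carrier: "mult_matrix f p \<in> carrier_mat (degree f) (degree f)"
  unfolding carrier_mat_def by simp

lemma mult_matrix_index:
  "i < degree f \<Longrightarrow> j < degree f \<Longrightarrow> mult_matrix f p $$ (i, j) = coeff (pseudo_mod (p * monom 1 j) f) i"
  unfolding mult_matrix_def by simp

locale monic_nonconstant =
  fixes f :: "'a::idom poly"
  assumes lead_coeff_f: "lead_coeff f = 1" and degree_f: "0 < degree f"
begin

lemma f_nonzero: "f \<noteq> 0"
  using degree_f by auto

lemma degree_pseudo_mod: "degree (pseudo_mod p f) < degree f"
  using pseudo_mod(2)[OF f_nonzero, of p] degree_f by auto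

lemma dvd_diff_pseudo_mod: "f dvd p - pseudo_mod p f"
proof -
  obtain q r where qr: "pseudo_divmod p f = (q, r)" by fastforce
  then have "p = f * q + r"
    using pseudo_divmod(1)[OF f_nonzero qr] lead_coeff_f by simp
  then show ?thesis using qr by (simp add: pseudo_mod_def)
qed

lemma pseudo_mod_unique:
  assumes "degree r < degree f" and "f dvd p - r"
  shows "pseudo_mod p f = r"
proof (rule ccontr)
  assume ne: "pseudo_mod p f \<noteq> r"
  have "f dvd pseudo_mod p f - r"
    using dvd_diff[OF assms(2) dvd_diff_pseudo_mod[of p]] by simp
  then have "degree f \<le> degree (pseudo_mod p f - r)"
    using ne by (intro dvd_imp_degree_le) auto
  also have "\<dots> < degree f"
    using degree_diff_le_max[of "pseudo_mod p f" r] degree_pseudo_mod[of p] assms(1) by linarith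
  finally show False by simp
qed

lemma pseudo_mod_add: "pseudo_mod (p + q) f = pseudo_mod p f + pseudo_mod q f"
proof (rule pseudo_mod_unique)
  show "degree (pseudo_mod p f + pseudo_mod q f) < degree f"
    using degree_add_le_max[of "pseudo_mod p f" "pseudo_mod q f"] degree_pseudo_mod[of p]
      degree_pseudo_mod[of q] by linarith
  have "p + q - (pseudo_mod p f + pseudo_mod q f) = (p - pseudo_mod p f) + (q - pseudo_mod q f)"
    by simp
  then show "f dvd p + q - (pseudo_mod p f + pseudo_mod q f)"
    using dvd_add[OF dvd_diff_pseudo_mod dvd_diff_pseudo_mod] by metis
qed

lemma mult_matrix_add: "mult_matrix f (p + q) = mult_matrix f p + mult_matrix f q"
  by (rule eq_matI) (simp_all add: mult_matrix_index distrib_right pseudo_mod_add)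

lemma mult_matrix_multiple: "mult_matrix f (f * u) = 0\<^sub>m (degree f) (degree f)"
proof -
  have "pseudo_mod (f * u * monom 1 j) f = 0" for j
    by (rule pseudo_mod_unique) (use degree_f in auto)
  then show ?thesis by (intro eq_matI) (simp_all add: mult_matrix_index)
qed

lemma mult_matrix_const: "mult_matrix f [:a:] = a \<cdot>\<^sub>m 1\<^sub>m (degree f)"
proof -
  have "pseudo_mod ([:a:] * monom 1 j) f = monom a j" if "j < degree f" for j
    by (rule pseudo_mod_unique)
      (use that in \<open>auto simp: smult_monom intro: le_less_trans[OF degree_monom_le]\<close>)
  then show ?thesis by (intro eq_matI) (simp_all add: mult_matrix_index)
qed

lemma mult_matrix_mult: "mult_matrix f (p * q) = mult_matrix f p * mult_matrix f q"
proof (rule eq_matI)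
  let ?d = "degree f" and ?r = "\<lambda>p j. pseudo_mod (p * monom 1 j) f"
  fix i j assume "i < dim_row (mult_matrix f p * mult_matrix f q)"
    and "j < dim_col (mult_matrix f p * mult_matrix f q)"
  then have i: "i < ?d" and j: "j < ?d" by (simp_all add: mult_matrix_def)
  define S where "S = (\<Sum>k<?d. Polynomial.smult (coeff (?r q j) k) (?r p k))"
  have "?r q j = (\<Sum>k<?d. monom (coeff (?r q j) k) k)"
    using poly_as_sum_of_monoms'[of "?r q j" "?d - 1"] degree_pseudo_mod[of "q * monom 1 j"] degree_f
    by (simp add: lessThan_Suc_atMost[symmetric])
  moreover have "p * monom c k = Polynomial.smult c (p * monom 1 k)" for c k
    by (metis mult_smult_right smult_monom mult.right_neutral)
  ultimately have "p * ?r q j = (\<Sum>k<?d. Polynomial.smult (coeff (?r q j) k) (p * monom 1 k))"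
    by (metis (no_types, lifting) sum.cong sum_distrib_left)
  then have "p * q * monom 1 j - S = p * (q * monom 1 j - ?r q j)
      + (\<Sum>k<?d. Polynomial.smult (coeff (?r q j) k) (p * monom 1 k - ?r p k))"
    unfolding S_def by (simp add: algebra_simps sum_subtractf Polynomial.smult_diff_right)
  moreover have "f dvd \<dots>"
    by (intro dvd_add dvd_mult dvd_sum dvd_smult dvd_diff_pseudo_mod)
  moreover have "degree S < ?d"
    unfolding S_def using degree_f
    by (intro degree_sum_less le_less_trans[OF degree_smult_le degree_pseudo_mod])
  ultimately have "?r (p * q) j = S"
    by (intro pseudo_mod_unique) (simp_all add: mult.assoc)
  then show "mult_matrix f (p * q) $$ (i, j) = (mult_matrix f p * mult_matrix f q) $$ (i, j)"
    using i j
    by (simp add: mult_matrix_index S_def coeff_sum scalar_prod_def lessThan_atLeast0 mult.commute)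
qed (simp_all add: mult_matrix_def)

lemma det_mult_matrix_combination:
  assumes "[:a:] = u * f + v * g"
  shows "a ^ degree f = det (mult_matrix f v) * det (mult_matrix f g)"
proof -
  have "[:a:] = f * u + v * g"
    using assms by (simp add: mult.commute)
  then have "mult_matrix f [:a:] = mult_matrix f (f * u) + mult_matrix f v * mult_matrix f g"
    by (simp only: mult_matrix_add mult_matrix_mult)
  also have "\<dots> = mult_matrix f v * mult_matrix f g"
    unfolding mult_matrix_multiple using mult_matrix_carrier
    by (intro left_add_zero_mat) (auto intro: mult_carrier_mat)
  finally have "det (mult_matrix f [:a:]) = det (mult_matrix f v) * det (mult_matrix f g)"
    using det_mult[OF mult_matrix_carrier mult_matrix_carrier] by simp
  then show ?thesis by (simp add: mult_matrix_const)
qed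

text \<open>With \<open>f(0) = g(0) = 0\<close> all multiples of \<open>g\<close> reduce to polynomials without constant term,
  so the first row of the matrix vanishes.\<close>
lemma det_mult_matrix_eq_0:
  assumes "coeff f 0 = 0" and "coeff g 0 = 0"
  shows "det (mult_matrix f g) = 0"
proof (rule det_zero_row[OF mult_matrix_carrier degree_f])
  fix j assume j: "j < degree f"
  obtain q where "g * monom 1 j - pseudo_mod (g * monom 1 j) f = f * q"
    using dvd_diff_pseudo_mod by (auto elim: dvdE)
  then have "coeff (g * monom 1 j - pseudo_mod (g * monom 1 j) f) 0 = coeff (f * q) 0"
    by simp
  then show "mult_matrix f g $$ (0, j) = 0"
    using assms j degree_f by (simp add: mult_matrix_index coeff_mult_0)
qed

context
  fixes h :: "'a \<Rightarrow> 'b::idom"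
  assumes h: "comm_ring_hom h"
begin

interpretation h: comm_ring_hom h by (rule h)

lemma degree_map_poly_f: "degree (map_poly h f) = degree f"
  and lead_coeff_map_poly_f: "lead_coeff (map_poly h f) = 1"
proof -
  have "coeff (map_poly h f) (degree f) = h (coeff f (degree f))"
    by (rule coeff_map_poly) simp
  then have lc: "coeff (map_poly h f) (degree f) = 1"
    using lead_coeff_f by simp
  then have "degree f \<le> degree (map_poly h f)"
    by (intro le_degree) simp
  then show "degree (map_poly h f) = degree f"
    using degree_map_poly_le[of h f] by (simp add: h.hom_zero)
  then show "lead_coeff (map_poly h f) = 1"
    using lc by simp
qed

lemma monic_nonconstant_map_poly: "monic_nonconstant (map_poly h f)"
  by (rule monic_nonconstant.intro[OF lead_coeff_map_poly_f]) (simp add: degree_map_poly_f degree_f)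

lemma map_poly_pseudo_mod: "map_poly h (pseudo_mod p f) = pseudo_mod (map_poly h p) (map_poly h f)"
proof -
  interpret hf: monic_nonconstant "map_poly h f" by (rule monic_nonconstant_map_poly)
  interpret hp: comm_ring_hom "map_poly h" by (rule comm_ring_hom_map_poly[OF h])
  show ?thesis
  proof (rule hf.pseudo_mod_unique[symmetric])
    show "degree (map_poly h (pseudo_mod p f)) < degree (map_poly h f)"
      using degree_map_poly_le[of h "pseudo_mod p f"] degree_pseudo_mod[of p]
      by (simp add: degree_map_poly_f h.hom_zero)
    show "map_poly h f dvd map_poly h p - map_poly h (pseudo_mod p f)"
      using hp.hom_dvd[OF dvd_diff_pseudo_mod[of p]] by (simp add: hp.hom_minus)
  qed
qed

lemma map_mat_mult_matrix:
  "map_mat h (mult_matrix f p) = mult_matrix (map_poly h f) (map_poly h p)"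
proof (rule eq_matI)
  interpret hp: comm_ring_hom "map_poly h" by (rule comm_ring_hom_map_poly[OF h])
  fix i j assume "i < dim_row (mult_matrix (map_poly h f) (map_poly h p))"
    and "j < dim_col (mult_matrix (map_poly h f) (map_poly h p))"
  then have ij: "i < degree f" "j < degree f" by (simp_all add: degree_map_poly_f)
  have "map_poly h p * monom 1 j = map_poly h (p * monom 1 j)"
    by (simp add: hp.hom_mult map_poly_monom)
  then show "map_mat h (mult_matrix f p) $$ (i, j) = mult_matrix (map_poly h f) (map_poly h p) $$ (i, j)"
    using ij by (simp add: mult_matrix_index degree_map_poly_f coeff_map_poly
        flip: map_poly_pseudo_mod)
qed (simp_all add: degree_map_poly_f)

end

end

section \<open>Two equations do not cut out the origin of 3-space\<close>

text \<open>\<open>K[x, y, z]\<close> is \<open>K[x][y][z]\<close>, so degrees and leading coefficients refer to \<open>z\<close>.\<close>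
definition x_var :: "'a::comm_ring_1 poly poly poly" where "x_var = [:[:[:0, 1:]:]:]"
definition y_var :: "'a::comm_ring_1 poly poly poly" where "y_var = [:[:0, 1:]:]"
definition z_var :: "'a::comm_ring_1 poly poly poly" where "z_var = [:0, 1:]"

definition origin_ideal :: "'a::comm_ring_1 poly poly poly set" where
  "origin_ideal = ideal_gen {x_var, y_var, z_var}"

definition eval_origin :: "'a::comm_ring_1 poly poly \<Rightarrow> 'a" where
  "eval_origin G = poly (poly G 0) 0"

lemma comm_ring_hom_eval_origin: "comm_ring_hom eval_origin"
proof -
  have "eval_origin = (\<lambda>p. poly p 0) \<circ> (\<lambda>G. poly G 0)"
    by (simp add: fun_eq_iff eval_origin_def)
  then show ?thesis
    using comm_ring_hom_comp[OF comm_ring_hom_poly comm_ring_hom_poly] by metis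
qed

lemma origin_ideal_vanishes:
  assumes "F \<in> origin_ideal"
  shows "coeff (map_poly eval_origin F) 0 = 0"
proof -
  interpret ev: comm_ring_hom "map_poly eval_origin"
    by (rule comm_ring_hom_map_poly[OF comm_ring_hom_eval_origin])
  let ?L = "{F :: 'a poly poly poly. coeff (map_poly eval_origin F) 0 = 0}"
  have "is_ideal ?L"
    unfolding is_ideal_def by (simp add: ev.hom_add ev.hom_mult coeff_mult_0)
  moreover have "{x_var, y_var, z_var} \<subseteq> ?L"
    by (simp add: x_var_def y_var_def z_var_def eval_origin_def map_poly_pCons)
  ultimately show ?thesis
    using assms ideal_gen_minimal unfolding origin_ideal_def by blast
qed

lemma monic_nonconstant_if_vanishes:
  fixes f :: "'a::idom poly poly poly"
  assumes "lead_coeff f = 1" and "coeff (map_poly eval_origin f) 0 = 0"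
  shows "monic_nonconstant f"
proof
  show "lead_coeff f = 1" by fact
  show "0 < degree f"
  proof (rule ccontr)
    assume "\<not> 0 < degree f"
    then have "f = [:1:]"
      using assms(1) degree_0_id[of f] by simp
    then show False using assms(2) by (simp add: eval_origin_def map_poly_pCons)
  qed
qed

text \<open>Taking norms modulo \<open>f\<close>, \<open>N(g)\<close> divides powers of \<open>x\<close> and of \<open>y\<close> in \<open>R[x,y]\<close>, hence is
  a constant unit; but \<open>N(g)\<close> vanishes at the origin since \<open>f\<close> and \<open>g\<close> do.\<close>
lemma monic_pair_no_powers_of_x_y:
  fixes f g :: "'a::idom poly poly poly"
  assumes f: "monic_nonconstant f"
    and x: "x_var ^ m \<in> ideal_gen {f, g}" and y: "y_var ^ n \<in> ideal_gen {f, g}"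
    and f0: "coeff (map_poly eval_origin f) 0 = 0" and g0: "coeff (map_poly eval_origin g) 0 = 0"
  shows False
proof -
  interpret monic_nonconstant f by (rule f)
  let ?N = "det (mult_matrix f g)" and ?d = "degree f"
  have "[:[:[:0, 1:]:] ^ m:] \<in> ideal_gen {f, g}"
    using x by (simp add: x_var_def poly_const_pow)
  then obtain u v where "[:[:[:0, 1:]:] ^ m:] = u * f + v * g"
    unfolding ideal_gen_pair by blast
  then have "[:[:0, 1:]:] ^ (m * ?d) = det (mult_matrix f v) * ?N"
    by (simp add: det_mult_matrix_combination power_mult)
  then have "?N dvd [:[:0, 1:] ^ (m * ?d):]"
    by (simp add: poly_const_pow)
  then have "degree ?N = 0"
    using dvd_imp_degree_le[of ?N] by fastforce
  then obtain c where Nc: "?N = [:c:]"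
    by (metis degree_0_id)
  have "[:[:0, 1:] ^ n:] \<in> ideal_gen {f, g}"
    using y by (simp add: y_var_def poly_const_pow)
  then obtain u' v' where "[:[:0, 1:] ^ n:] = u' * f + v' * g"
    unfolding ideal_gen_pair by blast
  then have "[:0, 1:] ^ (n * ?d) = [:c:] * det (mult_matrix f v')"
    by (simp add: det_mult_matrix_combination power_mult Nc mult.commute)
  then have "monom 1 (n * ?d) = Polynomial.smult c (det (mult_matrix f v'))"
    by (simp add: monom_altdef)
  then have "1 = c * coeff (det (mult_matrix f v')) (n * ?d)"
    by (metis coeff_monom coeff_smult)
  then have "poly c 0 * poly (coeff (det (mult_matrix f v')) (n * ?d)) 0 = 1"
    by (metis poly_1 poly_mult)
  then have "eval_origin ?N \<noteq> 0"
    by (auto simp: Nc eval_origin_def)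
  moreover have "eval_origin ?N = det (map_mat eval_origin (mult_matrix f g))"
    by (rule comm_ring_hom.hom_det[OF comm_ring_hom_eval_origin, symmetric])
  moreover have "\<dots> = det (mult_matrix (map_poly eval_origin f) (map_poly eval_origin g))"
    by (simp only: map_mat_mult_matrix[OF comm_ring_hom_eval_origin])
  moreover have "\<dots> = 0"
    using monic_nonconstant_map_poly[OF comm_ring_hom_eval_origin] f0 g0
    by (rule monic_nonconstant.det_mult_matrix_eq_0)
  ultimately show False by simp
qed

subsection \<open>Nagata's substitution\<close>

definition const3 :: "'a::comm_ring_1 \<Rightarrow> 'a poly poly poly" where
  "const3 c = [:[:[:c:]:]:]"

text \<open>The substitution \<open>F(x, y, z) \<mapsto> F(x + z\<^bsup>e\<^sub>1\<^esup>, y + z\<^bsup>e\<^sub>2\<^esup>, z)\<close>.\<close>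
definition nagata_subst :: "nat \<Rightarrow> nat \<Rightarrow> 'a::comm_ring_1 poly poly poly \<Rightarrow> 'a poly poly poly" where
  "nagata_subst e\<^sub>1 e\<^sub>2 F = poly (map_poly (\<lambda>G. poly (map_poly (\<lambda>H.
      poly (map_poly const3 H) (x_var + z_var ^ e\<^sub>1)) G) (y_var + z_var ^ e\<^sub>2)) F) z_var"

lemma comm_ring_hom_const3: "comm_ring_hom const3"
  unfolding const3_def by unfold_locales (simp_all add: pCons_one)

lemma comm_ring_hom_nagata_subst: "comm_ring_hom (nagata_subst e\<^sub>1 e\<^sub>2)"
  unfolding nagata_subst_def[abs_def]
  by (intro comm_ring_hom_poly_map_poly comm_ring_hom_const3)

lemma nagata_subst_x: "nagata_subst e\<^sub>1 e\<^sub>2 x_var = x_var + z_var ^ e\<^sub>1"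
  by (simp add: nagata_subst_def x_var_def const3_def map_poly_pCons one_pCons[symmetric])

lemma nagata_subst_y: "nagata_subst e\<^sub>1 e\<^sub>2 y_var = y_var + z_var ^ e\<^sub>2"
  by (simp add: nagata_subst_def y_var_def const3_def map_poly_pCons one_pCons[symmetric])

lemma nagata_subst_z: "nagata_subst e\<^sub>1 e\<^sub>2 z_var = z_var"
  by (simp add: nagata_subst_def z_var_def const3_def map_poly_pCons one_pCons[symmetric])

lemma nagata_subst_origin_ideal:
  fixes F :: "'a::comm_ring_1 poly poly poly"
  assumes "F \<in> origin_ideal" "0 < e\<^sub>1" "0 < e\<^sub>2"
  shows "nagata_subst e\<^sub>1 e\<^sub>2 F \<in> origin_ideal"
proof -
  interpret \<sigma>: comm_ring_hom "nagata_subst e\<^sub>1 e\<^sub>2 :: 'a poly poly poly \<Rightarrow> _"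
    by (rule comm_ring_hom_nagata_subst)
  let ?O = "origin_ideal :: 'a poly poly poly set"
  note J = is_ideal_ideal_gen[of "{x_var, y_var, z_var}", folded origin_ideal_def]
  have "{x_var, y_var, z_var} \<subseteq> ?O"
    unfolding origin_ideal_def by (rule ideal_gen_superset)
  then have vars: "x_var \<in> ?O" "y_var \<in> ?O" "z_var \<in> ?O"
    by simp_all
  have "nagata_subst e\<^sub>1 e\<^sub>2 x_var \<in> ?O" "nagata_subst e\<^sub>1 e\<^sub>2 y_var \<in> ?O"
    unfolding nagata_subst_x nagata_subst_y
    using vars ideal_power[OF J vars(3)] assms(2,3) by (blast intro: ideal_add[OF J])+
  then have "nagata_subst e\<^sub>1 e\<^sub>2 ` {x_var, y_var, z_var} \<subseteq> ?O"
    using vars(3) by (simp add: nagata_subst_z)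
  then have "ideal_gen (nagata_subst e\<^sub>1 e\<^sub>2 ` {x_var, y_var, z_var}) \<subseteq> ?O"
    by (rule ideal_gen_minimal[OF J])
  then show ?thesis
    using \<sigma>.hom_ideal_gen[OF assms(1)[unfolded origin_ideal_def]] by blast
qed

lemma poly_map_poly_bounded:
  fixes h :: "'a::zero \<Rightarrow> 'b::comm_semiring_1"
  assumes "h 0 = 0" and "degree p \<le> D"
  shows "poly (map_poly h p) a = (\<Sum>i\<le>D. h (coeff p i) * a ^ i)"
proof -
  have "degree (map_poly h p) \<le> D"
    using degree_map_poly_le[of h p] assms by simp
  have "poly (map_poly h p) a = (\<Sum>i\<le>degree (map_poly h p). coeff (map_poly h p) i * a ^ i)"
    by (rule poly_altdef)
  also have "\<dots> = (\<Sum>i\<le>D. coeff (map_poly h p) i * a ^ i)"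
    using \<open>degree (map_poly h p) \<le> D\<close>
    by (intro sum.mono_neutral_left) (auto simp: coeff_eq_0)
  finally show ?thesis by (simp add: coeff_map_poly assms(1))
qed

lemma nagata_subst_expansion:
  fixes F :: "'a::comm_ring_1 poly poly poly"
  assumes D: "degree F \<le> D" "\<And>l. degree (coeff F l) \<le> D" "\<And>l j. degree (coeff (coeff F l) j) \<le> D"
  shows "nagata_subst e\<^sub>1 e\<^sub>2 F = (\<Sum>(l, j, i)\<in>{..D} \<times> {..D} \<times> {..D}.
    const3 (coeff (coeff (coeff F l) j) i) * ((x_var + z_var ^ e\<^sub>1) ^ i * (y_var + z_var ^ e\<^sub>2) ^ j * z_var ^ l))"
proof -
  define \<phi>\<^sub>1 where "\<phi>\<^sub>1 H = poly (map_poly const3 H) (x_var + z_var ^ e\<^sub>1)" for H :: "'a poly"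
  define \<phi>\<^sub>2 where "\<phi>\<^sub>2 G = poly (map_poly \<phi>\<^sub>1 G) (y_var + z_var ^ e\<^sub>2)" for G :: "'a poly poly"
  have zero: "\<phi>\<^sub>1 0 = 0" "\<phi>\<^sub>2 0 = 0" "const3 0 = (0 :: 'a poly poly poly)"
    by (simp_all add: \<phi>\<^sub>1_def \<phi>\<^sub>2_def const3_def)
  have \<phi>\<^sub>1: "\<phi>\<^sub>1 H = (\<Sum>i\<le>D. const3 (coeff H i) * (x_var + z_var ^ e\<^sub>1) ^ i)"
    if "degree H \<le> D" for H
    unfolding \<phi>\<^sub>1_def by (rule poly_map_poly_bounded[of const3, OF zero(3) that])
  have \<phi>\<^sub>2: "\<phi>\<^sub>2 G = (\<Sum>j\<le>D. \<phi>\<^sub>1 (coeff G j) * (y_var + z_var ^ e\<^sub>2) ^ j)"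
    if "degree G \<le> D" for G
    unfolding \<phi>\<^sub>2_def by (rule poly_map_poly_bounded[of "\<phi>\<^sub>1", OF zero(1) that])
  have "nagata_subst e\<^sub>1 e\<^sub>2 F = poly (map_poly \<phi>\<^sub>2 F) z_var"
    unfolding nagata_subst_def \<phi>\<^sub>2_def[abs_def] \<phi>\<^sub>1_def[abs_def] ..
  also have "\<dots> = (\<Sum>l\<le>D. \<phi>\<^sub>2 (coeff F l) * z_var ^ l)"
    by (rule poly_map_poly_bounded[of "\<phi>\<^sub>2", OF zero(2) D(1)])
  also have "\<dots> = (\<Sum>l\<le>D. \<Sum>j\<le>D. \<Sum>i\<le>D. const3 (coeff (coeff (coeff F l) j) i) *
      ((x_var + z_var ^ e\<^sub>1) ^ i * (y_var + z_var ^ e\<^sub>2) ^ j * z_var ^ l))"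
    by (simp only: \<phi>\<^sub>2[OF D(2)] \<phi>\<^sub>1[OF D(3)] sum_distrib_right mult.assoc)
  also have "\<dots> = (\<Sum>(l, j, i)\<in>{..D} \<times> {..D} \<times> {..D}. const3 (coeff (coeff (coeff F l) j) i) *
      ((x_var + z_var ^ e\<^sub>1) ^ i * (y_var + z_var ^ e\<^sub>2) ^ j * z_var ^ l))"
    by (simp only: sum.cartesian_product)
  finally show ?thesis .
qed

lemma lead_coeff_sum_dominant:
  fixes P :: "'t \<Rightarrow> 'b::comm_ring_1 poly"
  assumes "finite T" "t\<^sub>0 \<in> T" "a t\<^sub>0 \<noteq> 0"
    and P: "\<And>t. t \<in> T \<Longrightarrow> lead_coeff (P t) = 1 \<and> degree (P t) = w t"
    and less: "\<And>t. t \<in> T \<Longrightarrow> t \<noteq> t\<^sub>0 \<Longrightarrow> a t \<noteq> 0 \<Longrightarrow> w t < w t\<^sub>0"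
  shows "lead_coeff (\<Sum>t\<in>T. Polynomial.smult (a t) (P t)) = a t\<^sub>0"
proof -
  let ?S = "\<Sum>t\<in>T. Polynomial.smult (a t) (P t)"
  have "coeff ?S n = a t\<^sub>0 * coeff (P t\<^sub>0) n" if "w t\<^sub>0 \<le> n" for n
  proof -
    have "a t * coeff (P t) n = 0" if "t \<in> T - {t\<^sub>0}" for t
      using less[of t] P[of t] that \<open>w t\<^sub>0 \<le> n\<close> by (cases "a t = 0") (auto simp: coeff_eq_0)
    then have "coeff ?S n = a t\<^sub>0 * coeff (P t\<^sub>0) n + (\<Sum>t\<in>T - {t\<^sub>0}. a t * coeff (P t) n)"
      using assms(1,2) by (simp add: coeff_sum sum.remove)
    with \<open>\<And>t. t \<in> T - {t\<^sub>0} \<Longrightarrow> a t * coeff (P t) n = 0\<close> show ?thesis by simp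
  qed
  moreover have "coeff (P t\<^sub>0) (w t\<^sub>0) = 1"
    using P[OF assms(2)] by metis
  ultimately have top: "coeff ?S (w t\<^sub>0) = a t\<^sub>0"
    by simp
  have above: "coeff ?S n = 0" if "w t\<^sub>0 < n" for n
    using \<open>\<And>n. w t\<^sub>0 \<le> n \<Longrightarrow> _\<close>[of n] P[OF assms(2)] that by (simp add: coeff_eq_0)
  have "degree ?S = w t\<^sub>0"
    using top above assms(3) by (intro antisym degree_le le_degree) auto
  then show ?thesis using top by simp
qed

lemma monic_const_plus_X_power:
  fixes a :: "'a::comm_ring_1"
  assumes "0 < e"
  shows "lead_coeff ([:a:] + [:0, 1:] ^ e) = 1" "degree ([:a:] + [:0, 1:] ^ e) = e"
proof -
  have "[:a:] + [:0, 1:] ^ e = pCons a 0 + monom 1 e"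
    by (simp add: monom_altdef)
  then have c: "coeff ([:a:] + [:0, 1:] ^ e) n = (if n = e then 1 else if n = 0 then a else 0)" for n
    using assms by (auto simp: coeff_pCons coeff_monom split: nat.split)
  then have "degree ([:a:] + [:0, 1:] ^ e) \<le> e"
    by (intro degree_le) simp
  moreover have "e \<le> degree ([:a:] + [:0, 1:] ^ e)"
    using c by (intro le_degree) simp
  ultimately show "degree ([:a:] + [:0, 1:] ^ e) = e" by simp
  then show "lead_coeff ([:a:] + [:0, 1:] ^ e) = 1" using c by simp
qed

lemma monic_nagata_monomial:
  fixes x y z :: "'a::idom poly poly poly"
  assumes "0 < e\<^sub>1" "0 < e\<^sub>2"
  defines "x \<equiv> x_var + z_var ^ e\<^sub>1" and "y \<equiv> y_var + z_var ^ e\<^sub>2" and "z \<equiv> z_var"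
  shows "lead_coeff (x ^ i * y ^ j * z ^ l) = 1 \<and> degree (x ^ i * y ^ j * z ^ l) = i * e\<^sub>1 + j * e\<^sub>2 + l"
proof -
  have "lead_coeff x = 1" "degree x = e\<^sub>1" "lead_coeff y = 1" "degree y = e\<^sub>2"
    using monic_const_plus_X_power assms(1,2)
    unfolding x_def y_def x_var_def y_var_def z_var_def by blast+
  moreover have "lead_coeff z = 1" "degree z = 1"
    unfolding z_def z_var_def by simp_all
  ultimately have "x \<noteq> 0" "y \<noteq> 0" "z \<noteq> 0" and "lead_coeff x = 1" "lead_coeff y = 1" "lead_coeff z = 1"
    and "degree x = e\<^sub>1" "degree y = e\<^sub>2" "degree z = 1"
    by auto
  then show ?thesis
    by (simp only: lead_coeff_mult lead_coeff_power power_one mult_1_left)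
      (simp add: degree_mult_eq degree_power_eq)
qed

lemma mixed_radix_eq:
  fixes B :: nat
  assumes "l < B" "i < B" "l' < B" "i' < B"
    and eq: "i * B + j * (B * B) + l = i' * B + j' * (B * B) + l'"
  shows "(l, j, i) = (l', j', i')"
proof -
  have eq': "l + B * (i + B * j) = l' + B * (i' + B * j')"
    using eq by (simp add: algebra_simps)
  have "l = l'"
    using arg_cong[OF eq', of "\<lambda>n. n mod B"] assms(1,3) by simp
  then have ij: "i + B * j = i' + B * j'"
    using assms(1) eq' by simp
  have "i = (i + B * j) mod B" using assms(2) by simp
  also have "\<dots> = (i' + B * j') mod B" by (simp only: ij)
  also have "\<dots> = i'" using assms(4) by simp
  finally have "i = i'" .
  with ij assms(1) \<open>l = l'\<close> show ?thesis by simp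
qed

lemma finite_obtain_max:
  fixes f :: "'a \<Rightarrow> 'b::linorder"
  assumes "finite S" "S \<noteq> {}"
  obtains x where "x \<in> S" "\<And>y. y \<in> S \<Longrightarrow> f y \<le> f x"
proof -
  have "Max (f ` S) \<in> f ` S"
    using assms by (intro Max_in finite_imageI) auto
  then obtain x where x: "Max (f ` S) = f x" "x \<in> S"
    by (rule imageE)
  have "f y \<le> f x" if "y \<in> S" for y
    unfolding x(1)[symmetric] using assms(1) that by (intro Max_ge finite_imageI imageI)
  with x(2) show ?thesis by (rule that)
qed

lemma coeff_le_sum_coeffs:
  fixes \<phi> :: "'a::zero \<Rightarrow> nat"
  assumes "\<phi> 0 = 0"
  shows "\<phi> (coeff F l) \<le> (\<Sum>k\<le>degree F. \<phi> (coeff F k))"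
proof (cases "l \<le> degree F")
  case True
  then show ?thesis by (intro member_le_sum) auto
next
  case False
  then show ?thesis using assms by (simp add: coeff_eq_0)
qed

lemma uniform_degree_bound:
  fixes F :: "'a::zero poly poly poly"
  obtains D where "degree F \<le> D" "\<And>l. degree (coeff F l) \<le> D"
    "\<And>l j. degree (coeff (coeff F l) j) \<le> D"
proof
  define \<psi> where "\<psi> G = (\<Sum>k\<le>degree G. degree (coeff G k))" for G :: "'a poly poly"
  let ?D = "degree F + (\<Sum>k\<le>degree F. degree (coeff F k)) + (\<Sum>k\<le>degree F. \<psi> (coeff F k))"
  show "degree F \<le> ?D" by simp
  show "degree (coeff F l) \<le> ?D" for l
    using coeff_le_sum_coeffs[of degree F l] by simp
  show "degree (coeff (coeff F l) j) \<le> ?D" for l j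
  proof -
    have "degree (coeff (coeff F l) j) \<le> \<psi> (coeff F l)"
      unfolding \<psi>_def by (rule coeff_le_sum_coeffs) simp
    also have "\<dots> \<le> (\<Sum>k\<le>degree F. \<psi> (coeff F k))"
      by (rule coeff_le_sum_coeffs) (simp add: \<psi>_def)
    finally show ?thesis by simp
  qed
qed

text \<open>With \<open>e\<^sub>1 = D + 1\<close> and \<open>e\<^sub>2 = (D + 1)\<^sup>2\<close>, the monomials \<open>x\<^sup>i y\<^sup>j z\<^sup>l\<close> of \<open>F\<close> are
  sent to polynomials in \<open>z\<close> of pairwise distinct degrees \<open>l + (D + 1) i + (D + 1)\<^sup>2 j\<close>, each
  with leading coefficient \<open>1\<close>.\<close>
lemma nagata_subst_lead_coeff:
  fixes F :: "'a::idom poly poly poly"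
  assumes "F \<noteq> 0"
  obtains e\<^sub>1 e\<^sub>2 c where "0 < e\<^sub>1" "0 < e\<^sub>2" "c \<noteq> 0" "lead_coeff (nagata_subst e\<^sub>1 e\<^sub>2 F) = [:[:c:]:]"
proof -
  obtain D where D: "degree F \<le> D" "\<And>l. degree (coeff F l) \<le> D"
    "\<And>l j. degree (coeff (coeff F l) j) \<le> D"
    using uniform_degree_bound[of F] by blast
  define B where "B = D + 1"
  define T where "T = {..D} \<times> {..D} \<times> {..D}"
  define c where "c = (\<lambda>(l, j, i). coeff (coeff (coeff F l) j) i)"
  define w where "w = (\<lambda>(l, j, i). i * B + j * (B * B) + l)"
  define P :: "nat \<times> nat \<times> nat \<Rightarrow> 'a poly poly poly" where
    "P = (\<lambda>(l, j, i). (x_var + z_var ^ B) ^ i * (y_var + z_var ^ (B * B)) ^ j * z_var ^ l)"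
  define T' where "T' = {t \<in> T. c t \<noteq> 0}"
  define l\<^sub>0 where "l\<^sub>0 = degree F"
  define j\<^sub>0 where "j\<^sub>0 = degree (coeff F l\<^sub>0)"
  define i\<^sub>0 where "i\<^sub>0 = degree (coeff (coeff F l\<^sub>0) j\<^sub>0)"
  have "coeff F l\<^sub>0 \<noteq> 0" using assms by (simp add: l\<^sub>0_def)
  then have "coeff (coeff F l\<^sub>0) j\<^sub>0 \<noteq> 0" by (simp add: j\<^sub>0_def)
  then have "coeff (coeff (coeff F l\<^sub>0) j\<^sub>0) i\<^sub>0 \<noteq> 0" by (simp add: i\<^sub>0_def)
  moreover have "(l\<^sub>0, j\<^sub>0, i\<^sub>0) \<in> T"
    unfolding T_def l\<^sub>0_def j\<^sub>0_def i\<^sub>0_def by (simp add: D)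
  ultimately have "(l\<^sub>0, j\<^sub>0, i\<^sub>0) \<in> T'"
    by (simp add: T'_def c_def)
  then have "T' \<noteq> {}" by blast
  have "finite T'" unfolding T'_def T_def by simp
  then obtain t\<^sub>0 where t\<^sub>0: "t\<^sub>0 \<in> T'" and max: "\<And>t. t \<in> T' \<Longrightarrow> w t \<le> w t\<^sub>0"
    using finite_obtain_max[OF _ \<open>T' \<noteq> {}\<close>, of w] by metis
  have "lead_coeff (\<Sum>t\<in>T. Polynomial.smult [:[:c t:]:] (P t)) = [:[:c t\<^sub>0:]:]"
  proof (rule lead_coeff_sum_dominant)
    show "finite T" "t\<^sub>0 \<in> T" "[:[:c t\<^sub>0:]:] \<noteq> 0"
      using t\<^sub>0 by (auto simp: T_def T'_def)
    show "lead_coeff (P t) = 1 \<and> degree (P t) = w t" for t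
      using monic_nagata_monomial[of B "B * B"] by (auto simp: P_def w_def B_def split: prod.split)
    fix t assume t: "t \<in> T" "t \<noteq> t\<^sub>0" "[:[:c t:]:] \<noteq> 0"
    then have "t \<in> T'" by (simp add: T'_def)
    moreover have "w t \<noteq> w t\<^sub>0"
    proof
      assume "w t = w t\<^sub>0"
      obtain l j i l' j' i' where tt: "t = (l, j, i)" "t\<^sub>0 = (l', j', i')"
        by (cases t, cases t\<^sub>0) auto
      have "l < B" "i < B" "l' < B" "i' < B"
        using t(1) t\<^sub>0 by (auto simp: tt T_def T'_def B_def)
      moreover have "i * B + j * (B * B) + l = i' * B + j' * (B * B) + l'"
        using \<open>w t = w t\<^sub>0\<close> by (simp add: tt w_def)
      ultimately have "t = t\<^sub>0"
        unfolding tt by (rule mixed_radix_eq)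
      with t(2) show False ..
    qed
    ultimately show "w t < w t\<^sub>0" using max le_neq_implies_less by blast
  qed
  moreover have "nagata_subst B (B * B) F = (\<Sum>t\<in>T. Polynomial.smult [:[:c t:]:] (P t))"
    unfolding nagata_subst_expansion[OF D] T_def
    by (intro sum.cong) (auto simp: c_def P_def const3_def)
  moreover have "0 < B" "c t\<^sub>0 \<noteq> 0"
    using t\<^sub>0 by (simp_all add: B_def T'_def)
  ultimately show ?thesis
    using that[of B "B * B" "c t\<^sub>0"] by simp
qed

lemma nagata_normalization:
  fixes F :: "'a::field poly poly poly"
  assumes "F \<noteq> 0" "F \<in> origin_ideal"
  obtains e\<^sub>1 e\<^sub>2 f where "0 < e\<^sub>1" "0 < e\<^sub>2" "monic_nonconstant f" "f \<in> origin_ideal"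
    "\<And>H. ideal_gen {nagata_subst e\<^sub>1 e\<^sub>2 F, H} \<subseteq> ideal_gen {f, H}"
proof -
  obtain e\<^sub>1 e\<^sub>2 c where e: "0 < e\<^sub>1" "0 < e\<^sub>2" and "c \<noteq> 0"
    and lc: "lead_coeff (nagata_subst e\<^sub>1 e\<^sub>2 F) = [:[:c:]:]"
    using nagata_subst_lead_coeff[OF assms(1)] by blast
  define f where "f = const3 (inverse c) * nagata_subst e\<^sub>1 e\<^sub>2 F"
  have "const3 c * const3 (inverse c) = (1 :: 'a poly poly poly)"
    using \<open>c \<noteq> 0\<close> by (simp add: const3_def pCons_one)
  then have \<sigma>F: "nagata_subst e\<^sub>1 e\<^sub>2 F = const3 c * f"
    unfolding f_def by (metis mult.assoc mult_1)
  have "ideal_gen {nagata_subst e\<^sub>1 e\<^sub>2 F, H} \<subseteq> ideal_gen {f, H}" for H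
  proof
    fix p assume "p \<in> ideal_gen {nagata_subst e\<^sub>1 e\<^sub>2 F, H}"
    then obtain u v where "p = u * nagata_subst e\<^sub>1 e\<^sub>2 F + v * H"
      unfolding ideal_gen_pair by blast
    then have "p = (u * const3 c) * f + v * H"
      by (simp add: \<sigma>F mult.assoc)
    then show "p \<in> ideal_gen {f, H}"
      unfolding ideal_gen_pair by blast
  qed
  moreover have "f \<in> origin_ideal"
    using nagata_subst_origin_ideal[OF assms(2) e] is_ideal_ideal_gen
    unfolding f_def origin_ideal_def by (rule ideal_mult_left[rotated])
  moreover have "lead_coeff f = 1"
    using lc \<open>c \<noteq> 0\<close> by (simp add: f_def const3_def lead_coeff_mult pCons_one)
  ultimately show ?thesis
    using that[OF e] monic_nonconstant_if_vanishes origin_ideal_vanishes by blast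
qed

lemma rad_ideal_gen_pair_not_origin_nonzero:
  fixes F G :: "'a::field poly poly poly"
  assumes "F \<noteq> 0" and FG: "F \<in> origin_ideal" "G \<in> origin_ideal"
    and vars: "{x_var, y_var, z_var} \<subseteq> rad (ideal_gen {F, G})"
  shows False
proof -
  obtain e\<^sub>1 e\<^sub>2 f where e: "0 < e\<^sub>1" "0 < e\<^sub>2" and f: "monic_nonconstant f" "f \<in> origin_ideal"
    and sub: "\<And>H. ideal_gen {nagata_subst e\<^sub>1 e\<^sub>2 F, H} \<subseteq> ideal_gen {f, H}"
    using nagata_normalization[OF assms(1) FG(1)] by blast
  let ?\<sigma> = "nagata_subst e\<^sub>1 e\<^sub>2 :: 'a poly poly poly \<Rightarrow> _"
  interpret \<sigma>: comm_ring_hom ?\<sigma> by (rule comm_ring_hom_nagata_subst)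
  define g where "g = ?\<sigma> G"
  let ?J = "ideal_gen {f, g}"
  note J = is_ideal_rad[OF is_ideal_ideal_gen[of "{f, g}"]]
  have \<sigma>_rad: "?\<sigma> v \<in> rad ?J" if "v \<in> rad (ideal_gen {F, G})" for v
    using \<sigma>.hom_rad_ideal_gen[OF that] rad_mono[OF sub[of g]] by (auto simp: g_def)
  have xz: "x_var + z_var ^ e\<^sub>1 \<in> rad ?J" and yz: "y_var + z_var ^ e\<^sub>2 \<in> rad ?J"
    and z: "z_var \<in> rad ?J"
    using \<sigma>_rad[of x_var] \<sigma>_rad[of y_var] \<sigma>_rad[of z_var] vars
    by (simp_all add: nagata_subst_x nagata_subst_y nagata_subst_z)
  have "(x_var + z_var ^ e\<^sub>1) - z_var ^ e\<^sub>1 \<in> rad ?J" "(y_var + z_var ^ e\<^sub>2) - z_var ^ e\<^sub>2 \<in> rad ?J"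
    by (rule ideal_diff[OF J xz ideal_power[OF J z e(1)]], rule ideal_diff[OF J yz ideal_power[OF J z e(2)]])
  then obtain m n where x: "x_var ^ m \<in> ?J" and y: "y_var ^ n \<in> ?J"
    unfolding rad_def by auto
  have "g \<in> origin_ideal"
    unfolding g_def by (rule nagata_subst_origin_ideal[OF FG(2) e])
  then show False
    using monic_pair_no_powers_of_x_y[OF f(1) x y] origin_ideal_vanishes f(2) by blast
qed

lemma rad_ideal_gen_pair_not_origin:
  fixes F G :: "'a::field poly poly poly"
  assumes "F \<in> origin_ideal" "G \<in> origin_ideal"
  shows "\<not> {x_var, y_var, z_var} \<subseteq> rad (ideal_gen {F, G})"
proof
  assume vars: "{x_var, y_var, z_var} \<subseteq> rad (ideal_gen {F, G})"
  consider "F \<noteq> 0" | "G \<noteq> 0" | "F = 0" "G = 0" by blast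
  then show False
  proof cases
    case 1
    then show False by (rule rad_ideal_gen_pair_not_origin_nonzero[OF _ assms vars])
  next
    case 2
    have "{F, G} = {G, F}" by blast
    with 2 show False
      using rad_ideal_gen_pair_not_origin_nonzero[OF _ assms(2,1)] vars by simp
  next
    case 3
    then obtain n where "x_var ^ n \<in> ideal_gen {0, 0 :: 'a poly poly poly}"
      using vars unfolding rad_def by auto
    then have "x_var ^ n = (0 :: 'a poly poly poly)"
      unfolding ideal_gen_pair by simp
    then show False by (simp add: x_var_def)
  qed
qed

text \<open>Setting \<open>x\<^sub>4 = x\<^sub>5 = 1\<close> sends \<open>x\<^sub>1, x\<^sub>2, x\<^sub>3\<close> to \<open>x, y, z\<close>.\<close>
definition specialize_x45 :: "'a::comm_ring_1 mpoly5 \<Rightarrow> 'a poly poly poly" where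
  "specialize_x45 p = poly (poly p 1) 1"

lemma comm_ring_hom_specialize_x45: "comm_ring_hom specialize_x45"
proof -
  have "specialize_x45 = (\<lambda>q. poly q 1) \<circ> (\<lambda>p. poly p 1)"
    by (simp add: fun_eq_iff specialize_x45_def)
  then show ?thesis
    using comm_ring_hom_comp[OF comm_ring_hom_poly comm_ring_hom_poly] by metis
qed

lemma specialize_x45_vars:
  "specialize_x45 X1 = x_var" "specialize_x45 X2 = y_var" "specialize_x45 X3 = z_var"
  "specialize_x45 X4 = 1" "specialize_x45 X5 = 1"
  by (simp_all add: specialize_x45_def X1_def X2_def X3_def X4_def X5_def x_var_def y_var_def z_var_def)

lemma rad_ideal_gen_pair_ne_edge_ideal:
  fixes f g :: "'a::field mpoly5"
  shows "rad (ideal_gen {f, g}) \<noteq> ideal_gen {X1 * X3, X1 * X4, X2 * X4, X2 * X5, X3 * X5}"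
    (is "_ \<noteq> ideal_gen ?E")
proof
  assume R: "rad (ideal_gen {f, g}) = ideal_gen ?E"
  interpret \<psi>: comm_ring_hom "specialize_x45 :: 'a mpoly5 \<Rightarrow> _"
    by (rule comm_ring_hom_specialize_x45)
  let ?O = "origin_ideal :: 'a poly poly poly set"
  have "{x_var, y_var, z_var} \<subseteq> ?O"
    unfolding origin_ideal_def by (rule ideal_gen_superset)
  then have "specialize_x45 ` ?E \<subseteq> ?O"
    using ideal_mult_left[OF is_ideal_ideal_gen, of _ "{x_var, y_var, z_var}"]
    by (auto simp: \<psi>.hom_mult specialize_x45_vars origin_ideal_def)
  then have O: "specialize_x45 p \<in> ?O" if "p \<in> ideal_gen ?E" for p
    using \<psi>.hom_ideal_gen[OF that] ideal_gen_minimal[OF is_ideal_ideal_gen[of "{x_var, y_var, z_var}"]]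
    unfolding origin_ideal_def by blast
  have "f \<in> ideal_gen ?E" "g \<in> ideal_gen ?E"
    using R rad_superset[OF is_ideal_ideal_gen] ideal_gen_superset[of "{f, g}"] by blast+
  moreover have \<psi>_rad: "specialize_x45 p \<in> rad (ideal_gen {specialize_x45 f, specialize_x45 g})"
    if "p \<in> ?E" for p
    using \<psi>.hom_rad_ideal_gen[of p "{f, g}"] R ideal_gen_superset[of ?E] that by auto
  then have "{x_var, y_var, z_var} \<subseteq> rad (ideal_gen {specialize_x45 f, specialize_x45 g})"
    using \<psi>_rad[of "X1 * X4"] \<psi>_rad[of "X2 * X4"] \<psi>_rad[of "X3 * X5"]
    by (simp add: \<psi>.hom_mult specialize_x45_vars)
  ultimately show False
    using rad_ideal_gen_pair_not_origin O by blast
qed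

lemma edge_ideal_subset_rad:
  "ideal_gen {X1 * X3, X1 * X4, X2 * X4, X2 * X5, X3 * X5}
     \<subseteq> rad (ideal_gen {X1 * X3, X1 * X4 + X2 * X5, X2 * X4 + X3 * X5 :: 'a::field mpoly5})"
  (is "_ \<subseteq> rad ?J")
proof (rule ideal_gen_subset_rad[OF is_ideal_ideal_gen])
  note J = is_ideal_ideal_gen[of "{X1 * X3, X1 * X4 + X2 * X5, X2 * X4 + X3 * X5 :: 'a mpoly5}"]
  have "{X1 * X3, X1 * X4 + X2 * X5, X2 * X4 + X3 * X5} \<subseteq> ?J"
    by (rule ideal_gen_superset)
  then have a: "X1 * X3 \<in> ?J" and b: "X1 * X4 + X2 * X5 \<in> ?J" and c: "X2 * X4 + X3 * X5 \<in> ?J"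
    by simp_all
  have comb: "r * u + s * v - t * w \<in> ?J" if "u \<in> ?J" "v \<in> ?J" "w \<in> ?J" for r s t u v w
    using that by (intro ideal_diff[OF J] ideal_add[OF J] ideal_mult_left[OF J])
  have in_rad: "p \<in> rad ?J" if "p ^ 2 \<in> ?J" for p
    using that unfolding rad_def by blast
  have "(X1 * X4 :: 'a mpoly5) ^ 2 = X5 ^ 2 * (X1 * X3) + (X1 * X4) * (X1 * X4 + X2 * X5) - (X1 * X5) * (X2 * X4 + X3 * X5)"
    by (simp add: algebra_simps power2_eq_square)
  then have "(X1 * X4) ^ 2 \<in> ?J" by (simp only: comb[OF a b c])
  then have 14: "X1 * X4 \<in> rad ?J" by (rule in_rad)
  have "(X2 * X5 :: 'a mpoly5) ^ 2 = X5 ^ 2 * (X1 * X3) + (X2 * X5) * (X1 * X4 + X2 * X5) - (X1 * X5) * (X2 * X4 + X3 * X5)"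
    by (simp add: algebra_simps power2_eq_square)
  then have "(X2 * X5) ^ 2 \<in> ?J" by (simp only: comb[OF a b c])
  then have 25: "X2 * X5 \<in> rad ?J" by (rule in_rad)
  have "(X2 * X4 :: 'a mpoly5) ^ 2 = X4 ^ 2 * (X1 * X3) + (X2 * X4) * (X2 * X4 + X3 * X5) - (X3 * X4) * (X1 * X4 + X2 * X5)"
    by (simp add: algebra_simps power2_eq_square)
  then have "(X2 * X4) ^ 2 \<in> ?J" by (simp only: comb[OF a c b])
  then have 24: "X2 * X4 \<in> rad ?J" by (rule in_rad)
  have "(X3 * X5 :: 'a mpoly5) ^ 2 = X4 ^ 2 * (X1 * X3) + (X3 * X5) * (X2 * X4 + X3 * X5) - (X3 * X4) * (X1 * X4 + X2 * X5)"
    by (simp add: algebra_simps power2_eq_square)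
  then have "(X3 * X5) ^ 2 \<in> ?J" by (simp only: comb[OF a c b])
  then have 35: "X3 * X5 \<in> rad ?J" by (rule in_rad)
  have 13: "X1 * X3 \<in> rad ?J"
    using a rad_superset[OF J] by blast
  from 13 14 24 25 35 show "{X1 * X3, X1 * X4, X2 * X4, X2 * X5, X3 * X5} \<subseteq> rad ?J"
    by simp
qed

lemma ideal_gen_set_short_list:
  fixes gs :: "'a::comm_ring_1 list"
  assumes "length gs \<le> 2"
  obtains f g where "ideal_gen (set gs) = ideal_gen {f, g}"
proof -
  consider "gs = []" | a where "gs = [a]" | a b where "gs = [a, b]"
    using assms by (auto simp: le_Suc_eq numeral_2_eq_2 length_Suc_conv)
  then show ?thesis
  proof cases
    case 1
    then have "ideal_gen (set gs) = ideal_gen {0, 0}"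
      using ideal_gen_insert_zero[of "{} :: 'a set"] by simp
    then show ?thesis by (rule that)
  next
    case (2 a)
    then show ?thesis using that[of a a] by simp
  next
    case (3 a b)
    then show ?thesis using that[of a b] by simp
  qed
qed

lemma ara_eqI:
  assumes "length gs = n" "rad (ideal_gen (set gs)) = rad I"
    and "\<And>hs. length hs < n \<Longrightarrow> rad (ideal_gen (set hs)) \<noteq> rad I"
  shows "ara I = n"
  unfolding ara_def
  by (rule Least_equality) (use assms leI in blast)+

lemma edge_ideal_eq_rad:
  "ideal_gen {X1 * X3, X1 * X4, X2 * X4, X2 * X5, X3 * X5}
     = rad (ideal_gen {X1 * X3, X1 * X4 + X2 * X5, X2 * X4 + X3 * X5 :: 'a::field mpoly5})"
  (is "?I = rad ?J")
proof
  show "?I \<subseteq> rad ?J" by (rule edge_ideal_subset_rad)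
  have gens: "{X1 * X3, X1 * X4, X2 * X4, X2 * X5, X3 * X5} \<subseteq> ?I"
    by (rule ideal_gen_superset)
  then have "{X1 * X3, X1 * X4 + X2 * X5, X2 * X4 + X3 * X5} \<subseteq> ?I"
    using ideal_add[OF is_ideal_ideal_gen] by auto
  then have "rad ?J \<subseteq> rad ?I"
    by (intro rad_mono ideal_gen_minimal is_ideal_ideal_gen)
  then show "rad ?J \<subseteq> ?I"
    using radical_edge_ideal unfolding radical_def by blast
qed

theorem mainTheorem4:
  fixes I :: "'a::field mpoly5 set"
  assumes "I = ideal_gen {X1 * X3, X1 * X4, X2 * X4, X2 * X5, X3 * X5}"
  shows "I = rad (ideal_gen {X1 * X3, X1 * X4 + X2 * X5, X2 * X4 + X3 * X5})
         \<and> ara I = 3"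
proof -
  have I: "I = rad (ideal_gen {X1 * X3, X1 * X4 + X2 * X5, X2 * X4 + X3 * X5})"
    using edge_ideal_eq_rad assms by simp
  then have rad_I: "rad I = I" by (simp add: rad_rad)
  have "ara I = 3"
  proof (rule ara_eqI[of "[X1 * X3, X1 * X4 + X2 * X5, X2 * X4 + X3 * X5]"])
    show "rad (ideal_gen (set [X1 * X3, X1 * X4 + X2 * X5, X2 * X4 + X3 * X5])) = rad I"
      using I rad_I by simp
    fix hs :: "'a mpoly5 list"
    assume "length hs < 3"
    then have "length hs \<le> 2" by simp
    then obtain f g where "ideal_gen (set hs) = ideal_gen {f, g}"
      by (rule ideal_gen_set_short_list)
    then show "rad (ideal_gen (set hs)) \<noteq> rad I"
      using rad_ideal_gen_pair_ne_edge_ideal rad_I assms by simp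
  qed simp
  with I show ?thesis by simp
qed

end
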